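(* Let $n\ge2$, $m\ge2$ be integers, let $\mathcal{V}=\mathcal{V}_1\otimes\dots\otimes\mathcal{V}_m$ be a tensor product of vector spaces over a field $\mathbb{F}$, and let $\{x_a : a\in[n]\}$ be a multiset of product tensors with $x_a=x_{a,1}\otimes\dots\otimes x_{a,m}$. For $S\subseteq[n]$ and $j\in[m]$ let $d_j^S=\dim\operatorname{span}\{x_{a,j}:a\in S\}$. Let $r\in \{0,1,\dots,n\}$ be an integer. Suppose that for every subset $S \subseteq [n]$ with $2\leq |S| \leq n$ it holds that $|S|+\min\{|S|,r\} \leq\sum_{j=1}^m (d_j^S-1)+1$. Then any non-zero linear combination of more than $r$ elements of $\{x_a : a \in [n]\}$ has tensor rank greater than $r$, and every tensor $v \in \operatorname{span}\{x_a : a \in [n]\}$ of tensor rank at most $r$ has a unique tensor rank decomposition into a linear combination of elements of $\{x_a : a \in [n]\}$.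
   Context: $[n]=\{1,\dots,n\}$. A product tensor is a non-zero tensor $z_1\otimes\dots\otimes z_m$, $z_j\in\mathcal{V}_j$. The tensor rank of $v$ is the minimum number of product tensors summing to $v$; a tensor rank decomposition is such a minimal sum. A decomposition $v=\sum_{a\in[n]}z_a$ into product tensors constitutes a unique tensor rank decomposition if for every $r'\le n$ and every multiset of product tensors $\{y_a:a\in[r']\}$ with $v=\sum_{a\in[r']}y_a$, it holds that $r'=n$ and $\{z_a\}=\{y_a\}$ as multisets. A "linear combination of $k$ elements" means a combination of $k$ of the $x_a$ with non-zero coefficients. *)

theory Defs
  imports Complex_Main "HOL-Library.Function_Algebras" "HOL-Library.Multiset"
begin

text \<open>A vector of the j-th factor space is a function 'b => 'f (every vector space over
'f embeds linearly into such a function space). A tensor in V_1 (x) ... (x) V_m is a function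
(nat => 'b) => 'f on index tuples; the product tensor z_1 (x) ... (x) z_m is the function
i |-> prod_{j in {1..m}} z_j (i j). (The natural map from the algebraic tensor product of
function spaces into the function space on the product index set is injective.)\<close>

definition vscale :: "'f::field \<Rightarrow> ('b \<Rightarrow> 'f) \<Rightarrow> ('b \<Rightarrow> 'f)" where
  "vscale c v = (\<lambda>b. c * v b)"

definition tscale :: "'f::field \<Rightarrow> ((nat \<Rightarrow> 'b) \<Rightarrow> 'f) \<Rightarrow> ((nat \<Rightarrow> 'b) \<Rightarrow> 'f)" where
  "tscale c t = (\<lambda>i. c * t i)"

definition ptensor :: "nat \<Rightarrow> (nat \<Rightarrow> 'b \<Rightarrow> 'f::field) \<Rightarrow> (nat \<Rightarrow> 'b) \<Rightarrow> 'f" where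
  "ptensor m z = (\<lambda>i. \<Prod>j\<in>{1..m}. z j (i j))"

definition product_tensor :: "nat \<Rightarrow> ((nat \<Rightarrow> 'b) \<Rightarrow> 'f::field) \<Rightarrow> bool" where
  "product_tensor m t \<longleftrightarrow> t \<noteq> 0 \<and> (\<exists>z. t = ptensor m z)"

definition tensor_rank :: "nat \<Rightarrow> ((nat \<Rightarrow> 'b) \<Rightarrow> 'f::field) \<Rightarrow> nat" where
  "tensor_rank m v = (LEAST r. \<exists>Y. size Y = r \<and> (\<forall>y\<in>#Y. product_tensor m y) \<and> sum_mset Y = v)"

definition unique_trd :: "nat \<Rightarrow> ((nat \<Rightarrow> 'b) \<Rightarrow> 'f::field) \<Rightarrow> ((nat \<Rightarrow> 'b) \<Rightarrow> 'f) multiset \<Rightarrow> bool" where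
  "unique_trd m v Z \<longleftrightarrow> (\<forall>z\<in>#Z. product_tensor m z) \<and> sum_mset Z = v \<and>
     (\<forall>Y. size Y \<le> size Z \<and> (\<forall>y\<in>#Y. product_tensor m y) \<and> sum_mset Y = v \<longrightarrow> Y = Z)"

definition fdim :: "('b \<Rightarrow> 'f::field) set \<Rightarrow> nat" where
  "fdim S = vector_space.dim vscale S"

end

theory Submission
  imports Defs
begin

text \<open>The core is the splitting theorem of Lovitz and Petrov: if a finite family of nonzero
  product tensors cannot be split into two nonempty parts whose spans meet only in 0, then its span
  has dimension at least Sum_j (d_j - 1) + 1. By induction on the number of factors this reduces to
  two factors z_a = w_a (x) u_a, where the family w is again non-splittable and
  dim span u + dim span w <= dim span z + 1; the latter is proved by enlarging a subfamily U step by
  step along a minimal linear relation between z(U) and the rest.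

  Now let Sum_{a in T} c_a x_a = Sum_b y_b with at most r product tensors y_b. Breaking the combined
  family into non-splittable blocks, each block carries a relation with nonzero coefficients, so the
  dimension of its span is smaller than its size. Together with the hypothesis this leaves at most
  one x_a per y_b in each block, with equality only for blocks {x_a, y_b} where c_a x_a = y_b.
  Hence |T| <= r, and a decomposition of length |T| consists exactly of the c_a x_a.\<close>

global_interpretation vs: vector_space "vscale :: 'f::field \<Rightarrow> ('b \<Rightarrow> 'f) \<Rightarrow> ('b \<Rightarrow> 'f)"
  by unfold_locales (auto simp: vscale_def algebra_simps fun_eq_iff)

lemma tscale_eq_vscale: "tscale = vscale"
  by (simp add: tscale_def vscale_def fun_eq_iff)

lemma sum_apply: "(\<Sum>a\<in>A. F a) x = (\<Sum>a\<in>A. F a x)"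
  by (induct A rule: infinite_finite_induct) auto

lemma span_image_iff_sum:
  assumes "finite J"
  shows "x \<in> vs.span (g ` J) \<longleftrightarrow> (\<exists>\<mu>. x = (\<Sum>a\<in>J. vscale (\<mu> a) (g a)))"
proof
  assume "x \<in> vs.span (g ` J)"
  then show "\<exists>\<mu>. x = (\<Sum>a\<in>J. vscale (\<mu> a) (g a))"
  proof (induct rule: vs.span_induct_alt)
    case base
    show ?case by (intro exI[of _ "\<lambda>_. 0"]) simp
  next
    case (step c y x)
    then obtain a0 \<mu> where a0: "a0 \<in> J" "y = g a0" and x: "x = (\<Sum>a\<in>J. vscale (\<mu> a) (g a))"
      by auto
    have "vscale (if a = a0 then c else 0) (g a) = (if a = a0 then vscale c (g a) else 0)" for a
      by simp
    then have "(\<Sum>a\<in>J. vscale (\<mu> a + (if a = a0 then c else 0)) (g a)) = vscale c y + x"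
      using assms a0 by (simp add: x vs.scale_left_distrib sum.distrib sum.delta')
    then show ?case by metis
  qed
next
  assume "\<exists>\<mu>. x = (\<Sum>a\<in>J. vscale (\<mu> a) (g a))"
  then show "x \<in> vs.span (g ` J)"
    by (auto intro: vs.span_sum vs.span_scale vs.span_base)
qed

lemma in_span_if_scaled_in_span:
  assumes "vscale c x \<in> vs.span S" "c \<noteq> 0"
  shows "x \<in> vs.span S"
  using vs.span_scale[OF assms(1), of "inverse c"] assms(2) by simp

lemma in_span_if_relation:
  assumes "finite P" "(\<Sum>a\<in>P. vscale (c a) (g a)) = 0" "q \<in> P" "c q \<noteq> 0" "q \<notin> R"
    and "\<And>a. a \<in> P \<Longrightarrow> a \<noteq> q \<Longrightarrow> a \<notin> R \<Longrightarrow> c a = 0"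
  shows "g q \<in> vs.span (g ` R)"
proof -
  have "vscale (c q) (g q) + (\<Sum>a\<in>P - {q}. vscale (c a) (g a)) = 0"
    using assms(1-3) by (simp add: sum.remove)
  moreover have "(\<Sum>a\<in>P - {q}. vscale (c a) (g a)) = (\<Sum>a\<in>P \<inter> R. vscale (c a) (g a))"
    by (rule sum.mono_neutral_right) (use assms(1,5,6) in auto)
  ultimately have "vscale (c q) (g q) = - (\<Sum>a\<in>P \<inter> R. vscale (c a) (g a))"
    by (simp add: add_eq_0_iff2)
  also have "\<dots> \<in> vs.span (g ` R)"
    by (intro vs.span_neg vs.span_sum vs.span_scale vs.span_base) auto
  finally show ?thesis using assms(4) by (rule in_span_if_scaled_in_span)
qed

lemma card_le_dim_if_independent:
  assumes "finite V" "vs.independent S" "S \<subseteq> vs.span V"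
  shows "card S \<le> vs.dim V"
proof -
  obtain B where B: "B \<subseteq> V" "vs.independent B" "V \<subseteq> vs.span B" "card B = vs.dim V"
    using vs.basis_exists by blast
  have "S \<subseteq> vs.span B"
    using assms(3) vs.span_mono[OF B(3)] by (simp add: vs.span_span)
  moreover have "finite B"
    using B(1) assms(1) finite_subset by blast
  ultimately have "card S \<le> card B"
    using vs.independent_span_bound[OF _ assms(2)] by blast
  then show ?thesis
    using B(4) by simp
qed

lemma dim_mono_finite:
  assumes "finite W" "V \<subseteq> vs.span W"
  shows "vs.dim V \<le> vs.dim W"
proof -
  obtain B where B: "B \<subseteq> V" "vs.independent B" "V \<subseteq> vs.span B" "card B = vs.dim V"
    using vs.basis_exists by blast
  then show ?thesis
    using card_le_dim_if_independent[OF assms(1) B(2)] assms(2) by auto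
qed

lemma dim_Un_le_add_card:
  assumes "finite A" "finite C"
  shows "vs.dim (A \<union> C) \<le> vs.dim A + card C"
proof -
  obtain B where B: "B \<subseteq> A" "vs.independent B" "A \<subseteq> vs.span B" "card B = vs.dim A"
    using vs.basis_exists by blast
  have "A \<union> C \<subseteq> vs.span (B \<union> C)"
    using B(3) vs.span_mono[of B "B \<union> C"] vs.span_superset[of "B \<union> C"] by blast
  moreover have "finite (B \<union> C)"
    using B(1) assms finite_subset by blast
  ultimately have "vs.dim (A \<union> C) \<le> card (B \<union> C)"
    by (rule vs.dim_le_card)
  also have "\<dots> \<le> card B + card C"
    by (rule card_Un_le)
  finally show ?thesis
    using B(4) by simp
qed

lemma dim_singleton_le: "vs.dim {x} \<le> 1"
  using vs.dim_le_card'[of "{x}"] by simp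

lemma dim_singleton_nonzero: "x \<noteq> 0 \<Longrightarrow> vs.dim {x} = 1"
  using vs.dim_eq_card_independent[of "{x}"] vs.dependent_single[of x] by simp

section \<open>Independence modulo a subspace\<close>

definition independent_mod :: "('b \<Rightarrow> 'f::field) set \<Rightarrow> ('i \<Rightarrow> 'b \<Rightarrow> 'f) \<Rightarrow> 'i set \<Rightarrow> bool" where
  "independent_mod A g J \<longleftrightarrow>
     (\<forall>\<nu>. (\<Sum>a\<in>J. vscale (\<nu> a) (g a)) \<in> vs.span A \<longrightarrow> (\<forall>a\<in>J. \<nu> a = 0))"

lemma independent_mod_subset:
  assumes "independent_mod A g J" "finite J" "J' \<subseteq> J"
  shows "independent_mod A g J'"
  unfolding independent_mod_def
proof (intro allI impI ballI)
  fix \<nu> a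
  assume \<nu>: "(\<Sum>a\<in>J'. vscale (\<nu> a) (g a)) \<in> vs.span A" and a: "a \<in> J'"
  let ?\<nu> = "\<lambda>b. if b \<in> J' then \<nu> b else 0"
  have "(\<Sum>b\<in>J. vscale (?\<nu> b) (g b)) = (\<Sum>b\<in>J'. vscale (\<nu> b) (g b))"
    by (rule sum.mono_neutral_cong_right) (use assms(2,3) in auto)
  then have "(\<Sum>b\<in>J. vscale (?\<nu> b) (g b)) \<in> vs.span A"
    using \<nu> by simp
  then have "?\<nu> a = 0"
    by (rule assms(1)[unfolded independent_mod_def, rule_format, OF _ subsetD[OF assms(3) a]])
  then show "\<nu> a = 0"
    using a by simp
qed

lemma not_in_span_if_independent_mod:
  assumes "independent_mod A g J" "finite J" "a \<in> J"
  shows "g a \<notin> vs.span A"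
  using independent_mod_subset[OF assms(1,2), of "{a}", unfolded independent_mod_def,
      THEN spec[of _ "\<lambda>_. 1"]] assms(3)
  by auto

lemma inj_on_if_independent_mod:
  assumes "independent_mod A g J" "finite J"
  shows "inj_on g J"
proof (rule inj_onI, rule ccontr)
  fix a a'
  assume a: "a \<in> J" "a' \<in> J" "g a = g a'" "a \<noteq> a'"
  let ?\<nu> = "\<lambda>b. if b = a then 1 else - 1"
  have "(\<Sum>b\<in>{a, a'}. vscale (?\<nu> b) (g b)) = 0"
    using a(3,4) by (simp add: vs.scale_minus_left)
  then have "(\<Sum>b\<in>{a, a'}. vscale (?\<nu> b) (g b)) \<in> vs.span A"
    by (simp add: vs.span_zero)
  then show False
    using independent_mod_subset[OF assms, of "{a, a'}", unfolded independent_mod_def,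
        THEN spec[of _ ?\<nu>]] a(1,2)
    by simp
qed

lemma independent_Un_if_independent_mod:
  assumes "independent_mod A g J" "finite J" "finite A" "B \<subseteq> A" "vs.independent B"
  shows "vs.independent (B \<union> g ` J)" and "B \<inter> g ` J = {}"
proof -
  have "g a \<notin> B" if "a \<in> J" for a
    using not_in_span_if_independent_mod[OF assms(1,2) that] assms(4) vs.span_base by blast
  then show disjoint: "B \<inter> g ` J = {}"
    by blast
  have fB: "finite B"
    using assms(3,4) finite_subset by blast
  show "vs.independent (B \<union> g ` J)"
  proof (rule vs.independent_if_scalars_zero)
    show "finite (B \<union> g ` J)"
      using fB assms(2) by simp
  next
    fix f x
    assume sum0: "(\<Sum>x\<in>B \<union> g ` J. vscale (f x) x) = 0" and x: "x \<in> B \<union> g ` J"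
    have "(\<Sum>x\<in>B. vscale (f x) x) + (\<Sum>a\<in>J. vscale (f (g a)) (g a))
        = (\<Sum>x\<in>B. vscale (f x) x) + (\<Sum>x\<in>g ` J. vscale (f x) x)"
      by (simp add: sum.reindex[OF inj_on_if_independent_mod[OF assms(1,2)]])
    also have "\<dots> = (\<Sum>x\<in>B \<union> g ` J. vscale (f x) x)"
      using fB assms(2) disjoint by (intro sum.union_disjoint[symmetric]) auto
    also note sum0
    finally have "(\<Sum>x\<in>B. vscale (f x) x) + (\<Sum>a\<in>J. vscale (f (g a)) (g a)) = 0" .
    then have J_part: "(\<Sum>a\<in>J. vscale (f (g a)) (g a)) = - (\<Sum>x\<in>B. vscale (f x) x)"
      by (rule add_eq_0_iff[THEN iffD1])
    have "(\<Sum>x\<in>B. vscale (f x) x) \<in> vs.span A"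
      using assms(4) by (intro vs.span_sum vs.span_scale vs.span_base) auto
    then have J_zero: "\<forall>a\<in>J. f (g a) = 0"
      using assms(1)[unfolded independent_mod_def, THEN spec[of _ "\<lambda>a. f (g a)"]]
      unfolding J_part by (simp add: vs.span_neg)
    then have "(\<Sum>x\<in>B. vscale (f x) x) = 0"
      using J_part by simp
    then show "f x = 0"
      using x J_zero vs.independentD[OF assms(5) fB subset_refl] by blast
  qed
qed

lemma dim_add_card_le_if_independent_mod:
  assumes "independent_mod A g J" "finite J" "finite A"
  shows "vs.dim A + card J \<le> vs.dim (A \<union> g ` J)"
proof -
  obtain B where B: "B \<subseteq> A" "vs.independent B" "A \<subseteq> vs.span B" "card B = vs.dim A"
    using vs.basis_exists by blast
  note BJ = independent_Un_if_independent_mod[OF assms B(1,2)]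
  have "finite B"
    using B(1) assms(3) finite_subset by blast
  then have "card (B \<union> g ` J) = vs.dim A + card J"
    using BJ(2) B(4) assms(2) card_image[OF inj_on_if_independent_mod[OF assms(1,2)]]
    by (simp add: card_Un_disjoint)
  moreover have "card (B \<union> g ` J) \<le> vs.dim (A \<union> g ` J)"
    using B(1) assms(2,3) by (intro card_le_dim_if_independent BJ(1)) (auto intro: vs.span_base)
  ultimately show ?thesis
    by simp
qed

lemma dim_add_one_le_if_not_independent_mod:
  assumes "\<not> independent_mod A g J" "finite J" "finite A"
  shows "vs.dim (A \<union> g ` J) + 1 \<le> vs.dim A + card J"
proof -
  obtain \<nu> a0 where \<nu>: "(\<Sum>a\<in>J. vscale (\<nu> a) (g a)) \<in> vs.span A" "a0 \<in> J" "\<nu> a0 \<noteq> 0"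
    using assms(1) unfolding independent_mod_def by blast
  let ?R = "A \<union> g ` (J - {a0})"
  have "vscale (\<nu> a0) (g a0)
      = (\<Sum>a\<in>J. vscale (\<nu> a) (g a)) - (\<Sum>a\<in>J - {a0}. vscale (\<nu> a) (g a))"
    using sum.remove[OF assms(2) \<nu>(2), of "\<lambda>a. vscale (\<nu> a) (g a)"] by simp
  also have "\<dots> \<in> vs.span ?R"
  proof (rule vs.span_diff)
    show "(\<Sum>a\<in>J. vscale (\<nu> a) (g a)) \<in> vs.span ?R"
      using \<nu>(1) vs.span_mono[of A ?R] by blast
    show "(\<Sum>a\<in>J - {a0}. vscale (\<nu> a) (g a)) \<in> vs.span ?R"
      by (intro vs.span_sum vs.span_scale vs.span_base) auto
  qed
  finally have "g a0 \<in> vs.span ?R"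
    using \<nu>(3) by (rule in_span_if_scaled_in_span)
  then have "A \<union> g ` J \<subseteq> vs.span ?R"
    using vs.span_superset[of ?R] by blast
  then have "vs.dim (A \<union> g ` J) \<le> vs.dim ?R"
    using assms(2,3) by (intro dim_mono_finite) auto
  also have "\<dots> \<le> vs.dim A + card (g ` (J - {a0}))"
    using assms(2,3) by (intro dim_Un_le_add_card) auto
  also have "\<dots> \<le> vs.dim A + (card J - 1)"
    using assms(2) \<nu>(2) card_image_le[of "J - {a0}" g] by simp
  moreover have "card J \<ge> 1"
    using assms(2) \<nu>(2) card_gt_0_iff[of J] by auto
  ultimately show ?thesis
    by linarith
qed

lemma dim_add_one_le_card_if_relation:
  assumes "finite B" "B \<noteq> {}" "(\<Sum>a\<in>B. vscale (\<mu> a) (g a)) = 0" "\<forall>a\<in>B. \<mu> a \<noteq> 0"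
  shows "vs.dim (g ` B) + 1 \<le> card B"
proof -
  have "\<not> independent_mod {} g B"
    using assms(2-4) unfolding independent_mod_def by (auto simp: vs.span_zero)
  then show ?thesis
    using dim_add_one_le_if_not_independent_mod[of "{}" g B] assms(1)
    by (simp add: vs.dim_eq_card_independent[OF vs.independent_empty])
qed

lemma dim_add_card_le_if_independent_mod_Diff1:
  assumes "finite U" "finite P" "e \<in> P" "independent_mod (g ` U) g (P - {e})"
  shows "vs.dim (g ` U) + card P \<le> vs.dim (g ` (U \<union> P)) + 1"
proof -
  have "vs.dim (g ` U) + card (P - {e}) \<le> vs.dim (g ` U \<union> g ` (P - {e}))"
    using dim_add_card_le_if_independent_mod[OF assms(4)] assms(1,2) by simp
  also have "\<dots> \<le> vs.dim (g ` (U \<union> P))"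
    by (rule dim_mono_finite) (use assms(1,2) in \<open>auto intro: vs.span_base\<close>)
  finally show ?thesis
    using assms(2,3) by simp
qed

lemma dim_image_Un_le_if_in_span:
  assumes "finite U" "finite R" "\<And>a. a \<in> P \<Longrightarrow> g a \<in> vs.span (g ` U \<union> g ` R)"
  shows "vs.dim (g ` (U \<union> P)) \<le> vs.dim (g ` U \<union> g ` R)"
  using assms by (intro dim_mono_finite) (auto intro: vs.span_base)

lemma ex_dual_functionals_if_independent_mod:
  fixes A :: "('b \<Rightarrow> 'f::field) set"
  assumes "independent_mod A g J" "finite J" "finite A"
  obtains \<phi> where "\<And>q. q \<in> J \<Longrightarrow> module_hom vscale (*) (\<phi> q)"
    and "\<And>q x. q \<in> J \<Longrightarrow> x \<in> vs.span A \<Longrightarrow> \<phi> q x = 0"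
    and "\<And>q a. q \<in> J \<Longrightarrow> a \<in> J \<Longrightarrow> \<phi> q (g a) = (if a = q then 1 else 0)"
proof -
  obtain B where B: "B \<subseteq> A" "vs.independent B" "A \<subseteq> vs.span B" "card B = vs.dim A"
    using vs.basis_exists by blast
  note BJ = independent_Un_if_independent_mod[OF assms B(1,2)]
  interpret vfp: vector_space_pair "vscale :: 'f \<Rightarrow> ('b \<Rightarrow> 'f) \<Rightarrow> 'b \<Rightarrow> 'f" "(*) :: 'f \<Rightarrow> 'f \<Rightarrow> 'f"
    by unfold_locales (auto simp: vscale_def algebra_simps)
  define \<phi> where "\<phi> q = vfp.construct (B \<union> g ` J) (\<lambda>x. if x = g q then 1 else 0)" for q
  have hom: "module_hom vscale (*) (\<phi> q)" for q
    unfolding \<phi>_def module_hom_iff_linear by (rule vfp.linear_construct[OF BJ(1)])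
  have basis: "\<phi> q x = (if x = g q then 1 else 0)" if "x \<in> B \<union> g ` J" for q x
    unfolding \<phi>_def by (rule vfp.construct_basis[OF BJ(1) that])
  show ?thesis
  proof
    show "\<phi> q x = 0" if "q \<in> J" "x \<in> vs.span A" for q x
    proof -
      have "\<phi> q b = 0" if "b \<in> B" for b
        using basis[of b q] that BJ(2) \<open>q \<in> J\<close> by auto
      then have "\<phi> q y = 0" if "y \<in> vs.span B" for y
        using module_hom.eq_0_on_span[OF hom _ that] by blast
      then show ?thesis
        using vs.span_mono[OF B(3)] \<open>x \<in> vs.span A\<close> by (auto simp: vs.span_span)
    qed
    show "\<phi> q (g a) = (if a = q then 1 else 0)" if "q \<in> J" "a \<in> J" for q a
      using basis[of "g a" q] that inj_on_if_independent_mod[OF assms(1,2)]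
      by (auto simp: inj_on_def)
  qed (rule hom)
qed

lemma eq_sum_dual_coordinates:
  assumes "finite J" "x \<in> vs.span (g ` J)" "\<And>q. q \<in> J \<Longrightarrow> module_hom vscale (*) (\<phi> q)"
    and "\<And>q a. q \<in> J \<Longrightarrow> a \<in> J \<Longrightarrow> \<phi> q (g a) = (if a = q then 1 else 0)"
  shows "x = (\<Sum>q\<in>J. vscale (\<phi> q x) (g q))"
proof -
  obtain c where c: "x = (\<Sum>a\<in>J. vscale (c a) (g a))"
    using assms(1,2) span_image_iff_sum by blast
  have "\<phi> q x = c q" if "q \<in> J" for q
  proof -
    have "\<phi> q x = (\<Sum>a\<in>J. c a * \<phi> q (g a))"
      unfolding c using assms(3)[OF that] by (simp add: module_hom.sum module_hom.scale)
    also have "\<dots> = (\<Sum>a\<in>J. if a = q then c a else 0)"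
      using assms(4)[OF that] by (intro sum.cong) auto
    also have "\<dots> = c q"
      using assms(1) that by simp
    finally show ?thesis .
  qed
  then have "(\<Sum>q\<in>J. vscale (\<phi> q x) (g q)) = (\<Sum>q\<in>J. vscale (c q) (g q))"
    by (intro sum.cong) auto
  then show ?thesis
    using c by simp
qed

lemma ex_maximal_independent_mod:
  assumes "finite P"
  obtains Q where "Q \<subseteq> P" "independent_mod A g Q" "\<And>a. a \<in> P \<Longrightarrow> g a \<in> vs.span (A \<union> g ` Q)"
proof -
  define good where "good Q \<longleftrightarrow> Q \<subseteq> P \<and> independent_mod A g Q" for Q
  have "good {}"
    unfolding good_def independent_mod_def by simp
  moreover have "\<forall>Q. good Q \<longrightarrow> card Q < card P + 1"
  proof (intro allI impI)
    fix Q
    assume "good Q"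
    then show "card Q < card P + 1"
      using card_mono[OF assms, of Q] unfolding good_def by simp
  qed
  ultimately obtain Q where Q: "good Q" and max: "\<And>Q'. good Q' \<Longrightarrow> card Q' \<le> card Q"
    using ex_has_greatest_nat[of good "{}" card "card P + 1"] by blast
  have fQ: "finite Q"
    using Q assms finite_subset unfolding good_def by blast
  have spans: "g a \<in> vs.span (A \<union> g ` Q)" if a: "a \<in> P" for a
  proof (cases "a \<in> Q")
    case True
    then show ?thesis by (intro vs.span_base) auto
  next
    case False
    then have "\<not> good (insert a Q)"
      using max[of "insert a Q"] fQ by auto
    then have "\<not> independent_mod A g (insert a Q)"
      using Q a unfolding good_def by blast
    then obtain \<nu> a1 where \<nu>: "(\<Sum>b\<in>insert a Q. vscale (\<nu> b) (g b)) \<in> vs.span A"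
        "a1 \<in> insert a Q" "\<nu> a1 \<noteq> 0"
      unfolding independent_mod_def by blast
    have split: "(\<Sum>b\<in>insert a Q. vscale (\<nu> b) (g b)) = vscale (\<nu> a) (g a) + (\<Sum>b\<in>Q. vscale (\<nu> b) (g b))"
      using False fQ by simp
    have \<nu>_a: "\<nu> a \<noteq> 0"
    proof
      assume "\<nu> a = 0"
      then have "\<forall>b\<in>Q. \<nu> b = 0"
        using Q[unfolded good_def independent_mod_def, THEN conjunct2, THEN spec[of _ \<nu>]]
          \<nu>(1) split by simp
      then show False
        using \<nu>(2,3) \<open>\<nu> a = 0\<close> by auto
    qed
    have "vscale (\<nu> a) (g a) \<in> vs.span (A \<union> g ` Q)"
    proof -
      have "vscale (\<nu> a) (g a) = (\<Sum>b\<in>insert a Q. vscale (\<nu> b) (g b)) - (\<Sum>b\<in>Q. vscale (\<nu> b) (g b))"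
        using split by simp
      also have "\<dots> \<in> vs.span (A \<union> g ` Q)"
      proof (rule vs.span_diff)
        show "(\<Sum>b\<in>insert a Q. vscale (\<nu> b) (g b)) \<in> vs.span (A \<union> g ` Q)"
          using \<nu>(1) vs.span_mono[of A "A \<union> g ` Q"] by blast
        show "(\<Sum>b\<in>Q. vscale (\<nu> b) (g b)) \<in> vs.span (A \<union> g ` Q)"
          by (intro vs.span_sum vs.span_scale vs.span_base) auto
      qed
      finally show ?thesis .
    qed
    then show ?thesis
      using \<nu>_a by (rule in_span_if_scaled_in_span)
  qed
  show ?thesis
    using Q spans unfolding good_def by (intro that[of Q]) auto
qed

section \<open>Splittable families\<close>

definition splittable :: "('i \<Rightarrow> 'b \<Rightarrow> 'f::field) \<Rightarrow> 'i set \<Rightarrow> bool" where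
  "splittable g I \<longleftrightarrow>
     (\<exists>I1. I1 \<subseteq> I \<and> I1 \<noteq> {} \<and> I1 \<noteq> I \<and> vs.span (g ` I1) \<inter> vs.span (g ` (I - I1)) = {0})"

lemma relation_restricts_if_split:
  assumes "finite I" "I1 \<subseteq> I" "vs.span (g ` I1) \<inter> vs.span (g ` (I - I1)) = {0}"
    and "(\<Sum>a\<in>I. vscale (c a) (g a)) = 0"
  shows "(\<Sum>a\<in>I1. vscale (c a) (g a)) = 0" and "(\<Sum>a\<in>I - I1. vscale (c a) (g a)) = 0"
proof -
  have "(\<Sum>a\<in>I1. vscale (c a) (g a)) + (\<Sum>a\<in>I - I1. vscale (c a) (g a)) = 0"
    using assms(4) sum.subset_diff[OF assms(2,1), of "\<lambda>a. vscale (c a) (g a)"] by (simp add: add.commute)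
  then have eq: "(\<Sum>a\<in>I1. vscale (c a) (g a)) = - (\<Sum>a\<in>I - I1. vscale (c a) (g a))"
    by (rule add_eq_0_iff2[THEN iffD1])
  have "(\<Sum>a\<in>I - I1. vscale (c a) (g a)) \<in> vs.span (g ` (I - I1))"
    by (intro vs.span_sum vs.span_scale vs.span_base) auto
  then have "(\<Sum>a\<in>I1. vscale (c a) (g a)) \<in> vs.span (g ` (I - I1))"
    unfolding eq by (rule vs.span_neg)
  moreover have "(\<Sum>a\<in>I1. vscale (c a) (g a)) \<in> vs.span (g ` I1)"
    by (intro vs.span_sum vs.span_scale vs.span_base) auto
  ultimately show first: "(\<Sum>a\<in>I1. vscale (c a) (g a)) = 0"
    using assms(3) by blast
  show "(\<Sum>a\<in>I - I1. vscale (c a) (g a)) = 0"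
    using eq first by simp
qed

lemma ex_least_card_relation:
  assumes "finite W" "s \<noteq> 0" "s \<in> vs.span (g ` U)" "s \<in> vs.span (g ` W)"
  obtains P \<mu> where "P \<subseteq> W" "(\<Sum>a\<in>P. vscale (\<mu> a) (g a)) \<noteq> 0"
    "(\<Sum>a\<in>P. vscale (\<mu> a) (g a)) \<in> vs.span (g ` U)"
    "\<And>P' \<mu>'. P' \<subseteq> P \<Longrightarrow> (\<Sum>a\<in>P'. vscale (\<mu>' a) (g a)) \<noteq> 0 \<Longrightarrow>
      (\<Sum>a\<in>P'. vscale (\<mu>' a) (g a)) \<in> vs.span (g ` U) \<Longrightarrow> card P \<le> card P'"
proof -
  define good where "good P \<longleftrightarrow> P \<subseteq> W \<and> (\<exists>\<mu>. (\<Sum>a\<in>P. vscale (\<mu> a) (g a)) \<noteq> 0 \<and>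
    (\<Sum>a\<in>P. vscale (\<mu> a) (g a)) \<in> vs.span (g ` U))" for P
  obtain \<mu> where "s = (\<Sum>a\<in>W. vscale (\<mu> a) (g a))"
    using assms(1,4) span_image_iff_sum by blast
  then have "good W"
    using assms(2,3) unfolding good_def by blast
  then obtain P where P: "good P" and min: "\<And>P'. good P' \<Longrightarrow> card P \<le> card P'"
    using ex_has_least_nat[of good W card] by blast
  then obtain \<mu> where "P \<subseteq> W" "(\<Sum>a\<in>P. vscale (\<mu> a) (g a)) \<noteq> 0"
    "(\<Sum>a\<in>P. vscale (\<mu> a) (g a)) \<in> vs.span (g ` U)"
    unfolding good_def by blast
  moreover have "card P \<le> card P'" if "P' \<subseteq> P" "(\<Sum>a\<in>P'. vscale (\<mu>' a) (g a)) \<noteq> 0"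
    "(\<Sum>a\<in>P'. vscale (\<mu>' a) (g a)) \<in> vs.span (g ` U)" for P' \<mu>'
    using min[of P'] that \<open>P \<subseteq> W\<close> unfolding good_def by blast
  ultimately show ?thesis
    using that by blast
qed

context
  fixes g :: "'i \<Rightarrow> 'b \<Rightarrow> 'f::field" and U P :: "'i set"
  assumes finite_P: "finite P"
    and least: "\<And>P' \<mu>'. P' \<subseteq> P \<Longrightarrow> (\<Sum>a\<in>P'. vscale (\<mu>' a) (g a)) \<noteq> 0 \<Longrightarrow>
      (\<Sum>a\<in>P'. vscale (\<mu>' a) (g a)) \<in> vs.span (g ` U) \<Longrightarrow> card P \<le> card P'"
begin

lemma coefficients_nonzero_if_least_card:
  assumes "(\<Sum>a\<in>P. vscale (\<mu> a) (g a)) \<noteq> 0" "(\<Sum>a\<in>P. vscale (\<mu> a) (g a)) \<in> vs.span (g ` U)"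
  shows "\<forall>a\<in>P. \<mu> a \<noteq> 0"
proof (rule ccontr)
  assume "\<not> (\<forall>a\<in>P. \<mu> a \<noteq> 0)"
  then obtain a0 where a0: "a0 \<in> P" "\<mu> a0 = 0"
    by blast
  have "(\<Sum>a\<in>P - {a0}. vscale (\<mu> a) (g a)) = (\<Sum>a\<in>P. vscale (\<mu> a) (g a))"
    using finite_P a0 by (intro sum.mono_neutral_left) auto
  then have "card P \<le> card (P - {a0})"
    using assms by (intro least[where \<mu>' = \<mu>]) auto
  then show False
    using card_Diff1_less[OF finite_P a0(1)] by simp
qed

lemma independent_mod_Diff1_if_least_card:
  assumes "(\<Sum>a\<in>P. vscale (\<mu> a) (g a)) \<noteq> 0" "(\<Sum>a\<in>P. vscale (\<mu> a) (g a)) \<in> vs.span (g ` U)"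
    and "e \<in> P"
  shows "independent_mod (g ` U) g (P - {e})"
  unfolding independent_mod_def
proof (intro allI impI ballI)
  fix \<nu> a0
  assume \<nu>: "(\<Sum>a\<in>P - {e}. vscale (\<nu> a) (g a)) \<in> vs.span (g ` U)" and a0: "a0 \<in> P - {e}"
  let ?\<nu> = "\<nu>(e := 0)"
  have \<nu>_ext: "(\<Sum>a\<in>P. vscale (?\<nu> a) (g a)) = (\<Sum>a\<in>P - {e}. vscale (\<nu> a) (g a))"
    using finite_P assms(3) by (intro sum.mono_neutral_cong_right) auto
  show "\<nu> a0 = 0"
  proof (cases "(\<Sum>a\<in>P - {e}. vscale (\<nu> a) (g a)) = 0")
    case False
    then have "\<forall>a\<in>P. ?\<nu> a \<noteq> 0"
      using \<nu> \<nu>_ext by (intro coefficients_nonzero_if_least_card) simp_all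
    then show ?thesis
      using assms(3) by fastforce
  next
    case True
    \<comment> \<open>Subtracting a multiple of the relation \<nu> from \<mu> kills the coefficient at a0.\<close>
    define \<mu>' where "\<mu>' a = \<mu> a - \<mu> a0 / \<nu> a0 * ?\<nu> a" for a
    have "(\<Sum>a\<in>P. vscale (\<mu>' a) (g a))
        = (\<Sum>a\<in>P. vscale (\<mu> a) (g a)) - vscale (\<mu> a0 / \<nu> a0) (\<Sum>a\<in>P. vscale (?\<nu> a) (g a))"
      by (simp add: \<mu>'_def vs.scale_left_diff_distrib vs.scale_sum_right sum_subtractf vs.scale_scale)
    then have "\<forall>a\<in>P. \<mu>' a \<noteq> 0"
      using assms(1,2) \<nu>_ext True by (intro coefficients_nonzero_if_least_card) simp_all
    moreover have "\<mu>' a0 = 0" if "\<nu> a0 \<noteq> 0"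
      using a0 that by (simp add: \<mu>'_def)
    ultimately show ?thesis
      using a0 by blast
  qed
qed

end

lemma ex_minimal_relation:
  assumes "finite W" "s \<noteq> 0" "s \<in> vs.span (g ` U)" "s \<in> vs.span (g ` W)"
  obtains P \<mu> where "P \<subseteq> W" "(\<Sum>a\<in>P. vscale (\<mu> a) (g a)) \<noteq> 0"
    "(\<Sum>a\<in>P. vscale (\<mu> a) (g a)) \<in> vs.span (g ` U)" "\<forall>a\<in>P. \<mu> a \<noteq> 0"
    "\<And>e. e \<in> P \<Longrightarrow> independent_mod (g ` U) g (P - {e})"
proof -
  obtain P \<mu> where P: "P \<subseteq> W" and rel: "(\<Sum>a\<in>P. vscale (\<mu> a) (g a)) \<noteq> 0"
      "(\<Sum>a\<in>P. vscale (\<mu> a) (g a)) \<in> vs.span (g ` U)"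
    and least: "\<And>P' \<mu>'. P' \<subseteq> P \<Longrightarrow> (\<Sum>a\<in>P'. vscale (\<mu>' a) (g a)) \<noteq> 0 \<Longrightarrow>
      (\<Sum>a\<in>P'. vscale (\<mu>' a) (g a)) \<in> vs.span (g ` U) \<Longrightarrow> card P \<le> card P'"
    using ex_least_card_relation[OF assms] by blast
  have fP: "finite P"
    using P assms(1) finite_subset by blast
  show ?thesis
    using P rel coefficients_nonzero_if_least_card[OF fP least rel]
      independent_mod_Diff1_if_least_card[OF fP least rel]
    by (rule that)
qed

section \<open>Tensors with a distinguished slot\<close>

text \<open>For slot_free k w, tensor_in_slot k w u represents w (x) u with u in the k-th factor;
  contract_slot k \<phi> applies a functional to the k-th factor and contract_off_slot k \<psi> one to
  the remaining factors.\<close>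

definition tensor_in_slot :: "nat \<Rightarrow> ((nat \<Rightarrow> 'b) \<Rightarrow> 'f::field) \<Rightarrow> ('b \<Rightarrow> 'f) \<Rightarrow> (nat \<Rightarrow> 'b) \<Rightarrow> 'f" where
  "tensor_in_slot k w u = (\<lambda>i. w i * u (i k))"

definition slot_free :: "nat \<Rightarrow> ((nat \<Rightarrow> 'b) \<Rightarrow> 'f) \<Rightarrow> bool" where
  "slot_free k w \<longleftrightarrow> (\<forall>i b. w (i(k := b)) = w i)"

definition contract_slot ::
    "nat \<Rightarrow> (('b \<Rightarrow> 'f) \<Rightarrow> 'f) \<Rightarrow> ((nat \<Rightarrow> 'b) \<Rightarrow> 'f::field) \<Rightarrow> (nat \<Rightarrow> 'b) \<Rightarrow> 'f" where
  "contract_slot k \<phi> t = (\<lambda>i. \<phi> (\<lambda>b. t (i(k := b))))"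

definition contract_off_slot ::
    "nat \<Rightarrow> (((nat \<Rightarrow> 'b) \<Rightarrow> 'f) \<Rightarrow> 'f) \<Rightarrow> ((nat \<Rightarrow> 'b) \<Rightarrow> 'f::field) \<Rightarrow> 'b \<Rightarrow> 'f" where
  "contract_off_slot k \<psi> t = (\<lambda>b. \<psi> (\<lambda>i. t (i(k := b))))"

lemma module_hom_contract_slot:
  assumes "module_hom vscale (*) \<phi>"
  shows "module_hom vscale vscale (contract_slot k \<phi>)"
proof -
  have "contract_slot k \<phi> (x + y) i = (contract_slot k \<phi> x + contract_slot k \<phi> y) i" for x y i
    using module_hom.add[OF assms, of "\<lambda>b. x (i(k := b))" "\<lambda>b. y (i(k := b))"]
    by (simp add: contract_slot_def plus_fun_def)
  moreover have "contract_slot k \<phi> (vscale c x) i = vscale c (contract_slot k \<phi> x) i" for c x i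
    using module_hom.scale[OF assms, of c "\<lambda>b. x (i(k := b))"]
    by (simp add: contract_slot_def vscale_def)
  ultimately show ?thesis
    by (simp add: module_hom_iff vs.module_axioms fun_eq_iff)
qed

lemma module_hom_contract_off_slot:
  assumes "module_hom vscale (*) \<psi>"
  shows "module_hom vscale vscale (contract_off_slot k \<psi>)"
proof -
  have "contract_off_slot k \<psi> (x + y) b = (contract_off_slot k \<psi> x + contract_off_slot k \<psi> y) b" for x y b
    using module_hom.add[OF assms, of "\<lambda>i. x (i(k := b))" "\<lambda>i. y (i(k := b))"]
    by (simp add: contract_off_slot_def plus_fun_def)
  moreover have "contract_off_slot k \<psi> (vscale c x) b = vscale c (contract_off_slot k \<psi> x) b" for c x b
    using module_hom.scale[OF assms, of c "\<lambda>i. x (i(k := b))"]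
    by (simp add: contract_off_slot_def vscale_def)
  ultimately show ?thesis
    by (simp add: module_hom_iff vs.module_axioms fun_eq_iff)
qed

lemma contract_slot_tensor_in_slot:
  assumes "slot_free k w" "module_hom vscale (*) \<phi>"
  shows "contract_slot k \<phi> (tensor_in_slot k w u) = vscale (\<phi> u) w"
proof -
  have "contract_slot k \<phi> (tensor_in_slot k w u) = (\<lambda>i. \<phi> (vscale (w i) u))"
    using assms(1) by (simp add: contract_slot_def tensor_in_slot_def slot_free_def vscale_def)
  also have "\<dots> = (\<lambda>i. w i * \<phi> u)"
    using module_hom.scale[OF assms(2)] by simp
  finally show ?thesis
    by (simp add: vscale_def mult.commute)
qed

lemma contract_off_slot_tensor_in_slot:
  assumes "slot_free k w" "module_hom vscale (*) \<psi>"
  shows "contract_off_slot k \<psi> (tensor_in_slot k w u) = vscale (\<psi> w) u"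
proof -
  have "(\<lambda>i. tensor_in_slot k w u (i(k := b))) = vscale (u b) w" for b
    using assms(1) by (simp add: tensor_in_slot_def slot_free_def vscale_def mult.commute)
  then have "contract_off_slot k \<psi> (tensor_in_slot k w u) = (\<lambda>b. \<psi> (vscale (u b) w))"
    by (simp add: contract_off_slot_def)
  also have "\<dots> = (\<lambda>b. u b * \<psi> w)"
    using module_hom.scale[OF assms(2)] by simp
  finally show ?thesis
    by (simp add: vscale_def mult.commute)
qed

lemma ptensor_Suc: "ptensor (Suc m) z = tensor_in_slot (Suc m) (ptensor m z) (z (Suc m))"
  by (simp add: ptensor_def tensor_in_slot_def fun_eq_iff atLeastAtMostSuc_conv mult.commute)

lemma slot_free_ptensor: "slot_free (Suc m) (ptensor m z)"
  unfolding slot_free_def ptensor_def by (auto intro!: prod.cong)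

context
  fixes k :: nat and z w :: "'i \<Rightarrow> (nat \<Rightarrow> 'b) \<Rightarrow> 'f::field" and u :: "'i \<Rightarrow> 'b \<Rightarrow> 'f"
  assumes z_eq: "\<And>a. z a = tensor_in_slot k (w a) (u a)"
    and slot_free_w: "\<And>a. slot_free k (w a)"
begin

lemma contract_slot_sum:
  assumes "module_hom vscale (*) \<phi>"
  shows "contract_slot k \<phi> (\<Sum>a\<in>P. vscale (\<mu> a) (z a)) = (\<Sum>a\<in>P. vscale (\<mu> a * \<phi> (u a)) (w a))"
  using module_hom_contract_slot[OF assms, of k]
  by (simp add: module_hom.sum module_hom.scale z_eq contract_slot_tensor_in_slot[OF slot_free_w assms]
      vs.scale_scale)

lemma contract_off_slot_sum:
  assumes "module_hom vscale (*) \<psi>"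
  shows "contract_off_slot k \<psi> (\<Sum>a\<in>P. vscale (\<mu> a) (z a)) = (\<Sum>a\<in>P. vscale (\<mu> a * \<psi> (w a)) (u a))"
  using module_hom_contract_off_slot[OF assms, of k]
  by (simp add: module_hom.sum module_hom.scale z_eq contract_off_slot_tensor_in_slot[OF slot_free_w assms]
      vs.scale_scale)

lemma contract_slot_vanishes:
  assumes "module_hom vscale (*) \<phi>" "(\<Sum>a\<in>P. vscale (\<mu> a) (z a)) \<in> vs.span (z ` U)"
    and "\<And>b. b \<in> U \<Longrightarrow> \<phi> (u b) = 0"
  shows "(\<Sum>a\<in>P. vscale (\<mu> a * \<phi> (u a)) (w a)) = 0"
proof -
  have "contract_slot k \<phi> t = 0" if "t \<in> z ` U" for t
    using that assms(3) by (auto simp: z_eq contract_slot_tensor_in_slot[OF slot_free_w assms(1)])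
  then have "contract_slot k \<phi> (\<Sum>a\<in>P. vscale (\<mu> a) (z a)) = 0"
    using module_hom.eq_0_on_span[OF module_hom_contract_slot[OF assms(1)] _ assms(2)] by blast
  then show ?thesis
    by (simp add: contract_slot_sum[OF assms(1)])
qed

lemma contract_off_slot_vanishes:
  assumes "module_hom vscale (*) \<psi>" "(\<Sum>a\<in>P. vscale (\<mu> a) (z a)) \<in> vs.span (z ` U)"
    and "\<And>b. b \<in> U \<Longrightarrow> \<psi> (w b) = 0"
  shows "(\<Sum>a\<in>P. vscale (\<mu> a * \<psi> (w a)) (u a)) = 0"
proof -
  have "contract_off_slot k \<psi> t = 0" if "t \<in> z ` U" for t
    using that assms(3) by (auto simp: z_eq contract_off_slot_tensor_in_slot[OF slot_free_w assms(1)])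
  then have "contract_off_slot k \<psi> (\<Sum>a\<in>P. vscale (\<mu> a) (z a)) = 0"
    using module_hom.eq_0_on_span[OF module_hom_contract_off_slot[OF assms(1)] _ assms(2)] by blast
  then show ?thesis
    by (simp add: contract_off_slot_sum[OF assms(1)])
qed

lemma sum_vanishes_if_contractions_vanish:
  assumes "finite Q" "\<And>b. b \<in> P \<Longrightarrow> u b \<in> vs.span (u ` Q)"
    and "\<And>q. q \<in> Q \<Longrightarrow> module_hom vscale (*) (\<phi> q)"
    and "\<And>q a. q \<in> Q \<Longrightarrow> a \<in> Q \<Longrightarrow> \<phi> q (u a) = (if a = q then 1 else 0)"
    and "\<And>q. q \<in> Q \<Longrightarrow> (\<Sum>b\<in>P. vscale (\<mu> b * \<phi> q (u b)) (w b)) = 0"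
  shows "(\<Sum>b\<in>P. vscale (\<mu> b) (z b)) = 0"
proof
  fix i
  have "(\<Sum>b\<in>P. vscale (\<mu> b) (z b)) i = (\<Sum>b\<in>P. vscale (\<mu> b) (z b) i)"
    by (simp only: sum_apply)
  also have "\<dots> = (\<Sum>b\<in>P. \<mu> b * w b i * u b (i k))"
    by (simp add: z_eq tensor_in_slot_def vscale_def mult.assoc)
  also have "\<dots> = (\<Sum>b\<in>P. \<Sum>q\<in>Q. \<mu> b * w b i * (\<phi> q (u b) * u q (i k)))"
  proof (rule sum.cong[OF refl])
    fix b
    assume "b \<in> P"
    have "u b (i k) = (\<Sum>q\<in>Q. \<phi> q (u b) * u q (i k))"
      using fun_cong[OF eq_sum_dual_coordinates[OF assms(1) assms(2)[OF \<open>b \<in> P\<close>] assms(3,4)], of "i k"]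
      by (simp add: sum_apply vscale_def)
    then show "\<mu> b * w b i * u b (i k) = (\<Sum>q\<in>Q. \<mu> b * w b i * (\<phi> q (u b) * u q (i k)))"
      by (simp add: sum_distrib_left)
  qed
  also have "\<dots> = (\<Sum>q\<in>Q. \<Sum>b\<in>P. \<mu> b * \<phi> q (u b) * w b i * u q (i k))"
    by (subst sum.swap) (intro sum.cong refl; simp only: mult_ac)
  also have "\<dots> = (\<Sum>q\<in>Q. (\<Sum>b\<in>P. \<mu> b * \<phi> q (u b) * w b i) * u q (i k))"
    by (simp only: sum_distrib_right)
  also have "\<dots> = 0"
  proof (rule sum.neutral, rule ballI)
    fix q
    assume "q \<in> Q"
    then have "(\<Sum>b\<in>P. \<mu> b * \<phi> q (u b) * w b i) = 0"
      using fun_cong[OF assms(5), of q i] by (simp add: sum_apply vscale_def)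
    then show "(\<Sum>b\<in>P. \<mu> b * \<phi> q (u b) * w b i) * u q (i k) = 0"
      by simp
  qed
  finally show "(\<Sum>b\<in>P. vscale (\<mu> b) (z b)) i = 0 i"
    by simp
qed

lemma slice_of_sum: "(\<lambda>i. (\<Sum>a\<in>J. vscale (\<gamma> a) (z a)) (i(k := b))) = (\<Sum>a\<in>J. vscale (\<gamma> a * u a b) (w a))"
proof
  fix i
  have "w a (i(k := b)) = w a i" for a
    using slot_free_w[of a] unfolding slot_free_def by blast
  then show "(\<Sum>a\<in>J. vscale (\<gamma> a) (z a)) (i(k := b)) = (\<Sum>a\<in>J. vscale (\<gamma> a * u a b) (w a)) i"
    by (simp add: sum_apply z_eq tensor_in_slot_def vscale_def mult_ac)
qed

lemma not_splittable_left:
  assumes "finite I" "\<not> splittable z I"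
  shows "\<not> splittable w I"
proof
  assume "splittable w I"
  then obtain I1 where I1: "I1 \<subseteq> I" "I1 \<noteq> {}" "I1 \<noteq> I"
    and direct: "vs.span (w ` I1) \<inter> vs.span (w ` (I - I1)) = {0}"
    unfolding splittable_def by blast
  have fin: "finite I1" "finite (I - I1)"
    using assms(1) I1(1) finite_subset by auto
  have "s = 0" if s: "s \<in> vs.span (z ` I1)" "s \<in> vs.span (z ` (I - I1))" for s
  proof
    fix i
    obtain \<alpha> where \<alpha>: "s = (\<Sum>a\<in>I1. vscale (\<alpha> a) (z a))"
      using s(1) span_image_iff_sum[OF fin(1)] by blast
    obtain \<beta> where \<beta>: "s = (\<Sum>a\<in>I - I1. vscale (\<beta> a) (z a))"
      using s(2) span_image_iff_sum[OF fin(2)] by blast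
    \<comment> \<open>Freezing slot k of s gives a vector in both halves of the splitting of w.\<close>
    let ?t = "\<lambda>i'. s (i'(k := i k))"
    have "?t \<in> vs.span (w ` I1)"
      unfolding \<alpha> slice_of_sum by (intro vs.span_sum vs.span_scale vs.span_base) auto
    moreover have "?t \<in> vs.span (w ` (I - I1))"
      unfolding \<beta> slice_of_sum by (intro vs.span_sum vs.span_scale vs.span_base) auto
    ultimately have "?t = 0"
      using direct by blast
    then show "s i = 0 i"
      using fun_cong[of ?t 0 i] by simp
  qed
  then have "vs.span (z ` I1) \<inter> vs.span (z ` (I - I1)) = {0}"
    using vs.span_zero by blast
  then show False
    using assms(2) I1(1-3) unfolding splittable_def by blast
qed

context
  fixes U P Q :: "'i set" and \<mu> :: "'i \<Rightarrow> 'f" and \<phi> :: "'i \<Rightarrow> ('b \<Rightarrow> 'f) \<Rightarrow> 'f"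
  assumes finite_P: "finite P" and Q_subset: "Q \<subseteq> P" and \<mu>_nz: "\<forall>a\<in>P. \<mu> a \<noteq> 0"
    and relation_nz: "(\<Sum>a\<in>P. vscale (\<mu> a) (z a)) \<noteq> 0"
    and relation_in_span: "(\<Sum>a\<in>P. vscale (\<mu> a) (z a)) \<in> vs.span (z ` U)"
    and \<phi>_hom: "\<And>q. q \<in> Q \<Longrightarrow> module_hom vscale (*) (\<phi> q)"
    and \<phi>_U: "\<And>q x. q \<in> Q \<Longrightarrow> x \<in> vs.span (u ` U) \<Longrightarrow> \<phi> q x = 0"
    and \<phi>_Q: "\<And>q a. q \<in> Q \<Longrightarrow> a \<in> Q \<Longrightarrow> \<phi> q (u a) = (if a = q then 1 else 0)"
begin

lemma contracted_relation:
  assumes "q \<in> Q"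
  shows "(\<Sum>a\<in>P. vscale (\<mu> a * \<phi> q (u a)) (w a)) = 0"
proof (rule contract_slot_vanishes[OF \<phi>_hom[OF assms] relation_in_span])
  show "\<phi> q (u b) = 0" if "b \<in> U" for b
    using that by (intro \<phi>_U[OF assms] vs.span_base) blast
qed

lemma in_span_complement:
  assumes "q \<in> Q"
  shows "w q \<in> vs.span (w ` (P - Q))"
  by (rule in_span_if_relation[OF finite_P contracted_relation[OF assms]])
    (use assms Q_subset \<mu>_nz \<phi>_Q[OF assms] in auto)

lemma not_independent_mod_complement:
  assumes "finite U"
  shows "\<not> independent_mod (w ` U) w (P - Q)"
proof
  assume "independent_mod (w ` U) w (P - Q)"
  then obtain \<psi> where \<psi>_hom: "\<And>a. a \<in> P - Q \<Longrightarrow> module_hom vscale (*) (\<psi> a)"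
    and \<psi>_U: "\<And>a x. a \<in> P - Q \<Longrightarrow> x \<in> vs.span (w ` U) \<Longrightarrow> \<psi> a x = 0"
    and \<psi>_PQ: "\<And>a b. a \<in> P - Q \<Longrightarrow> b \<in> P - Q \<Longrightarrow> \<psi> a (w b) = (if b = a then 1 else 0)"
    using ex_dual_functionals_if_independent_mod finite_P assms by blast
  have "u a \<in> vs.span (u ` Q)" if "a \<in> P - Q" for a
  proof -
    have "(\<Sum>b\<in>P. vscale (\<mu> b * \<psi> a (w b)) (u b)) = 0"
      by (rule contract_off_slot_vanishes[OF \<psi>_hom[OF that] relation_in_span])
        (auto intro: \<psi>_U[OF that] vs.span_base)
    then show ?thesis
      by (rule in_span_if_relation[OF finite_P]) (use that Q_subset \<mu>_nz \<psi>_PQ[OF that] in auto)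
  qed
  then have u_in_span: "u a \<in> vs.span (u ` Q)" if "a \<in> P" for a
    using that by (cases "a \<in> Q") (auto intro: vs.span_base)
  have "(\<Sum>a\<in>P. vscale (\<mu> a) (z a)) = 0"
    by (rule sum_vanishes_if_contractions_vanish[where Q = Q and \<phi> = \<phi>])
      (use finite_subset[OF Q_subset finite_P] u_in_span \<phi>_hom \<phi>_Q contracted_relation in auto)
  then show False
    using relation_nz by contradiction
qed

end

text \<open>Starting from a minimal relation P between z(U) and the rest, a part Q of P that is maximal
  independent for u modulo u(U) controls the growth of the u-span, and contracting with functionals
  dual to u(Q) shows that w(P - Q) is dependent modulo w(U).\<close>

lemma dim_growth_step:
  assumes "finite I" "U \<subseteq> I" "U \<noteq> {}" "U \<noteq> I" "\<not> splittable z I"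
  obtains P where "P \<subseteq> I - U" "P \<noteq> {}"
    "vs.dim (z ` U) + card P \<le> vs.dim (z ` (U \<union> P)) + 1"
    "vs.dim (u ` (U \<union> P)) + vs.dim (w ` (U \<union> P)) + 1 \<le> vs.dim (u ` U) + vs.dim (w ` U) + card P"
proof -
  have fU: "finite U" and fW: "finite (I - U)"
    using assms(1,2) finite_subset by auto
  have "vs.span (z ` U) \<inter> vs.span (z ` (I - U)) \<noteq> {0}"
    using assms(2-5) unfolding splittable_def by blast
  then obtain s0 where "s0 \<noteq> 0" "s0 \<in> vs.span (z ` U)" "s0 \<in> vs.span (z ` (I - U))"
    using vs.span_zero by blast
  then obtain P \<mu> where P: "P \<subseteq> I - U" and rel: "(\<Sum>a\<in>P. vscale (\<mu> a) (z a)) \<noteq> 0"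
      "(\<Sum>a\<in>P. vscale (\<mu> a) (z a)) \<in> vs.span (z ` U)" "\<forall>a\<in>P. \<mu> a \<noteq> 0"
    and P_indep: "\<And>e. e \<in> P \<Longrightarrow> independent_mod (z ` U) z (P - {e})"
    using ex_minimal_relation[OF fW] by blast
  have fP: "finite P"
    using P fW finite_subset by blast
  have P_ne: "P \<noteq> {}"
    using rel(1) by auto
  then obtain e where e: "e \<in> P"
    by blast
  obtain Q where QP: "Q \<subseteq> P" and Q_indep: "independent_mod (u ` U) u Q"
    and u_span: "\<And>a. a \<in> P \<Longrightarrow> u a \<in> vs.span (u ` U \<union> u ` Q)"
    using ex_maximal_independent_mod[OF fP] by blast
  have fQ: "finite Q"
    using QP fP finite_subset by blast
  obtain \<phi> where \<phi>: "\<And>q. q \<in> Q \<Longrightarrow> module_hom vscale (*) (\<phi> q)"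
    "\<And>q x. q \<in> Q \<Longrightarrow> x \<in> vs.span (u ` U) \<Longrightarrow> \<phi> q x = 0"
    "\<And>q a. q \<in> Q \<Longrightarrow> a \<in> Q \<Longrightarrow> \<phi> q (u a) = (if a = q then 1 else 0)"
    using ex_dual_functionals_if_independent_mod[OF Q_indep fQ] fU by blast
  have "vs.dim (u ` (U \<union> P)) \<le> vs.dim (u ` U \<union> u ` Q)"
    by (rule dim_image_Un_le_if_in_span[OF fU fQ u_span])
  also have "\<dots> \<le> vs.dim (u ` U) + card (u ` Q)"
    using fU fQ by (intro dim_Un_le_add_card) auto
  also have "\<dots> \<le> vs.dim (u ` U) + card Q"
    using card_image_le[OF fQ, of u] by simp
  finally have u_dim: "vs.dim (u ` (U \<union> P)) \<le> vs.dim (u ` U) + card Q" .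
  have w_dim: "vs.dim (w ` (U \<union> P)) + 1 \<le> vs.dim (w ` U) + card (P - Q)"
  proof -
    have mono: "vs.span (w ` (P - Q)) \<subseteq> vs.span (w ` U \<union> w ` (P - Q))"
      by (rule vs.span_mono) auto
    have w_span: "w a \<in> vs.span (w ` U \<union> w ` (P - Q))" if "a \<in> P" for a
    proof (cases "a \<in> Q")
      case True
      then show ?thesis
        using in_span_complement[OF fP QP rel(3,1,2) \<phi> True] mono by blast
    next
      case False
      then show ?thesis
        using that by (intro vs.span_base) blast
    qed
    have "vs.dim (w ` (U \<union> P)) \<le> vs.dim (w ` U \<union> w ` (P - Q))"
      by (rule dim_image_Un_le_if_in_span[where P = P]) (use fU fP w_span in auto)
    also have "\<dots> + 1 \<le> vs.dim (w ` U) + card (P - Q)"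
      using not_independent_mod_complement[OF fP QP rel(3,1,2) \<phi> fU] fU fP
      by (intro dim_add_one_le_if_not_independent_mod) auto
    finally show ?thesis
      by simp
  qed
  have "card P = card Q + card (P - Q)"
    using card_Diff_subset[OF fQ QP] card_mono[OF fP QP] by simp
  then show ?thesis
    using u_dim w_dim
    by (intro that[OF P P_ne dim_add_card_le_if_independent_mod_Diff1[OF fU fP e P_indep[OF e]]]) linarith
qed

lemma dim_factors_le_dim_add_one:
  assumes "finite I" "I \<noteq> {}" "\<not> splittable z I" "\<And>a. a \<in> I \<Longrightarrow> z a \<noteq> 0"
  shows "vs.dim (u ` I) + vs.dim (w ` I) \<le> vs.dim (z ` I) + 1"
proof -
  define bounded where
    "bounded U \<longleftrightarrow> vs.dim (u ` U) + vs.dim (w ` U) \<le> vs.dim (z ` U) + 1" for U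
  have grow: "bounded I" if "U \<subseteq> I" "U \<noteq> {}" "bounded U" for U
    using that
  proof (induction "card (I - U)" arbitrary: U rule: less_induct)
    case less
    show ?case
    proof (cases "U = I")
      case True
      then show ?thesis
        using less.prems by simp
    next
      case False
      obtain P where P: "P \<subseteq> I - U" "P \<noteq> {}"
        and dims: "vs.dim (z ` U) + card P \<le> vs.dim (z ` (U \<union> P)) + 1"
          "vs.dim (u ` (U \<union> P)) + vs.dim (w ` (U \<union> P)) + 1 \<le> vs.dim (u ` U) + vs.dim (w ` U) + card P"
        using dim_growth_step[OF assms(1) less.prems(1,2) False assms(3)] by blast
      have "card (I - (U \<union> P)) < card (I - U)"
        using P assms(1) by (intro psubset_card_mono) auto
      moreover have "bounded (U \<union> P)"
        using less.prems(3) dims unfolding bounded_def by linarith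
      ultimately show ?thesis
        using less.prems(1,2) P(1) by (intro less.hyps[of "U \<union> P"]) auto
    qed
  qed
  obtain a where a: "a \<in> I"
    using assms(2) by blast
  have "bounded {a}"
    using dim_singleton_nonzero[OF assms(4)[OF a]] dim_singleton_le[of "u a"] dim_singleton_le[of "w a"]
    unfolding bounded_def by simp
  then have "bounded I"
    using a by (intro grow[of "{a}"]) auto
  then show ?thesis
    unfolding bounded_def .
qed

end

section \<open>The splitting theorem\<close>

definition factor_dims_bound :: "nat \<Rightarrow> ('i \<Rightarrow> nat \<Rightarrow> 'b \<Rightarrow> 'f::field) \<Rightarrow> 'i set \<Rightarrow> int" where
  "factor_dims_bound m f I = (\<Sum>j\<in>{1..m}. (int (vs.dim ((\<lambda>a. f a j) ` I)) - 1)) + 1"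

lemma factor_dims_bound_mono:
  assumes "finite J" "I \<subseteq> J"
  shows "factor_dims_bound m f I \<le> factor_dims_bound m f J"
proof -
  have "vs.dim ((\<lambda>a. f a j) ` I) \<le> vs.dim ((\<lambda>a. f a j) ` J)" for j
    using assms by (intro dim_mono_finite) (auto intro: vs.span_base)
  then have "int (vs.dim ((\<lambda>a. f a j) ` I)) - 1 \<le> int (vs.dim ((\<lambda>a. f a j) ` J)) - 1" for j
    by (simp only: diff_right_mono of_nat_mono)
  then show ?thesis
    unfolding factor_dims_bound_def by (intro add_right_mono sum_mono)
qed

theorem factor_dims_bound_le_dim_if_not_splittable:
  fixes f :: "'i \<Rightarrow> nat \<Rightarrow> 'b \<Rightarrow> 'f::field"
  assumes "finite I" "I \<noteq> {}" "\<And>a. a \<in> I \<Longrightarrow> ptensor m (f a) \<noteq> 0"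
    and "\<not> splittable (\<lambda>a. ptensor m (f a)) I"
  shows "factor_dims_bound m f I \<le> int (vs.dim ((\<lambda>a. ptensor m (f a)) ` I))"
  using assms(3,4)
proof (induction m)
  case 0
  have "(\<lambda>a. ptensor 0 (f a)) ` I = {\<lambda>_. 1}"
    using assms(2) by (auto simp: ptensor_def)
  then show ?case
    using dim_singleton_nonzero[of "(\<lambda>_. 1) :: (nat \<Rightarrow> 'b) \<Rightarrow> 'f"]
    by (simp add: factor_dims_bound_def fun_eq_iff)
next
  case (Suc m)
  let ?w = "\<lambda>a. ptensor m (f a)" and ?u = "\<lambda>a. f a (Suc m)"
  have z_eq: "ptensor (Suc m) (f a) = tensor_in_slot (Suc m) (?w a) (?u a)" for a
    by (rule ptensor_Suc)
  have "?w a \<noteq> 0" if "a \<in> I" for a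
    using Suc.prems(1)[OF that] by (auto simp: z_eq tensor_in_slot_def fun_eq_iff)
  moreover have "\<not> splittable ?w I"
    by (rule not_splittable_left[OF z_eq slot_free_ptensor assms(1) Suc.prems(2)])
  ultimately have "factor_dims_bound m f I \<le> int (vs.dim (?w ` I))"
    by (rule Suc.IH)
  moreover have "vs.dim (?u ` I) + vs.dim (?w ` I) \<le> vs.dim ((\<lambda>a. ptensor (Suc m) (f a)) ` I) + 1"
    by (rule dim_factors_le_dim_add_one[OF z_eq slot_free_ptensor assms(1,2) Suc.prems(2,1)])
  moreover have "factor_dims_bound (Suc m) f I = factor_dims_bound m f I + (int (vs.dim (?u ` I)) - 1)"
    by (simp add: factor_dims_bound_def atLeastAtMostSuc_conv)
  ultimately show ?case
    by linarith
qed

section \<open>Uniqueness of decompositions\<close>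

lemma card_lt_card_if_relation_not_splittable:
  fixes f :: "'i \<Rightarrow> nat \<Rightarrow> 'b \<Rightarrow> 'f::field"
  assumes "finite X" "finite Y" "X \<inter> Y = {}"
    and "\<And>i. i \<in> X \<union> Y \<Longrightarrow> ptensor m (f i) \<noteq> 0"
    and "(\<Sum>i\<in>X \<union> Y. vscale (\<mu> i) (ptensor m (f i))) = 0"
    and "\<And>i. i \<in> X \<union> Y \<Longrightarrow> \<mu> i \<noteq> 0"
    and "card Y \<le> r"
    and "\<And>S. S \<subseteq> X \<Longrightarrow> 2 \<le> card S \<Longrightarrow> int (card S) + int (min (card S) r) \<le> factor_dims_bound m f S"
    and "\<not> splittable (\<lambda>i. ptensor m (f i)) (X \<union> Y)"
    and "2 \<le> card X"
  shows "card X < card Y"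
proof -
  let ?z = "\<lambda>i. ptensor m (f i)"
  have "int (card X) + int (min (card X) r) \<le> factor_dims_bound m f X"
    using assms(8)[OF subset_refl assms(10)] .
  also have "\<dots> \<le> factor_dims_bound m f (X \<union> Y)"
    using assms(1,2) by (intro factor_dims_bound_mono) auto
  also have "\<dots> \<le> int (vs.dim (?z ` (X \<union> Y)))"
    using assms(1,2,4,9,10) by (intro factor_dims_bound_le_dim_if_not_splittable) auto
  finally have "int (card X) + int (min (card X) r) \<le> int (vs.dim (?z ` (X \<union> Y)))" .
  moreover have "vs.dim (?z ` (X \<union> Y)) + 1 \<le> card (X \<union> Y)"
    using assms(1,2,5,6,10) by (intro dim_add_one_le_card_if_relation) auto
  moreover have "card (X \<union> Y) = card X + card Y"
    using assms(1-3) by (rule card_Un_disjoint)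
  ultimately have "min (card X) r < card Y"
    by linarith
  then show ?thesis
    using assms(7) by linarith
qed

lemma card_le_card_if_relation_not_splittable:
  fixes f :: "'i \<Rightarrow> nat \<Rightarrow> 'b \<Rightarrow> 'f::field"
  assumes "finite X" "finite Y" "X \<inter> Y = {}"
    and "\<And>i. i \<in> X \<union> Y \<Longrightarrow> ptensor m (f i) \<noteq> 0"
    and "(\<Sum>i\<in>X \<union> Y. vscale (\<mu> i) (ptensor m (f i))) = 0"
    and "\<And>i. i \<in> X \<union> Y \<Longrightarrow> \<mu> i \<noteq> 0"
    and "card Y \<le> r"
    and "\<And>S. S \<subseteq> X \<Longrightarrow> 2 \<le> card S \<Longrightarrow> int (card S) + int (min (card S) r) \<le> factor_dims_bound m f S"
    and "\<not> splittable (\<lambda>i. ptensor m (f i)) (X \<union> Y)"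
  shows "card X \<le> card Y \<and> (card X = card Y \<longrightarrow>
    image_mset (\<lambda>i. vscale (\<mu> i) (ptensor m (f i))) (mset_set X)
      = image_mset (\<lambda>i. vscale (- \<mu> i) (ptensor m (f i))) (mset_set Y))"
proof -
  let ?z = "\<lambda>i. ptensor m (f i)"
  consider "X = {}" | a where "X = {a}" | "2 \<le> card X"
  proof (cases "2 \<le> card X")
    case False
    then consider "card X = 0" | "card X = 1"
      by linarith
    then show ?thesis
      using assms(1) that(1,2) by cases (auto simp: card_1_singleton_iff)
  qed
  then show ?thesis
  proof cases
    case 1
    then show ?thesis
      using assms(2) by auto
  next
    case (2 a)
    have "Y \<noteq> {}"
    proof
      assume "Y = {}"
      then have "vscale (\<mu> a) (?z a) = 0"
        using assms(5) 2 by simp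
      then show False
        using assms(4,6)[of a] 2 by simp
    qed
    then have "1 \<le> card Y"
      using assms(2) by (simp add: Suc_le_eq card_gt_0_iff)
    moreover have "image_mset (\<lambda>i. vscale (\<mu> i) (?z i)) (mset_set X)
        = image_mset (\<lambda>i. vscale (- \<mu> i) (?z i)) (mset_set Y)" if "card Y = 1"
    proof -
      obtain b where b: "Y = {b}"
        using card_1_singletonE[OF \<open>card Y = 1\<close>] by blast
      then have "a \<noteq> b"
        using assms(3) 2 by blast
      then have "vscale (\<mu> a) (?z a) + vscale (\<mu> b) (?z b) = 0"
        using assms(5) 2 b by (simp add: add.commute)
      then show ?thesis
        using 2 b by (simp add: add_eq_0_iff2 vs.scale_minus_left)
    qed
    ultimately show ?thesis
      using 2 by auto
  next
    case 3
    then show ?thesis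
      using card_lt_card_if_relation_not_splittable[OF assms] by simp
  qed
qed

lemma card_le_card_if_relation:
  fixes f :: "'i \<Rightarrow> nat \<Rightarrow> 'b \<Rightarrow> 'f::field"
  assumes "finite X" "finite Y" "X \<inter> Y = {}"
    and "\<And>i. i \<in> X \<union> Y \<Longrightarrow> ptensor m (f i) \<noteq> 0"
    and "(\<Sum>i\<in>X \<union> Y. vscale (\<mu> i) (ptensor m (f i))) = 0"
    and "\<And>i. i \<in> X \<union> Y \<Longrightarrow> \<mu> i \<noteq> 0"
    and "card Y \<le> r"
    and "\<And>S. S \<subseteq> X \<Longrightarrow> 2 \<le> card S \<Longrightarrow> int (card S) + int (min (card S) r) \<le> factor_dims_bound m f S"
  shows "card X \<le> card Y \<and> (card X = card Y \<longrightarrow>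
    image_mset (\<lambda>i. vscale (\<mu> i) (ptensor m (f i))) (mset_set X)
      = image_mset (\<lambda>i. vscale (- \<mu> i) (ptensor m (f i))) (mset_set Y))"
  using assms
proof (induction "card (X \<union> Y)" arbitrary: X Y rule: less_induct)
  case less
  let ?z = "\<lambda>i. ptensor m (f i)"
  show ?case
  proof (cases "splittable ?z (X \<union> Y)")
    case False
    then show ?thesis
      using card_le_card_if_relation_not_splittable[OF less.prems] by blast
  next
    case True
    then obtain I1 where I1: "I1 \<subseteq> X \<union> Y" "I1 \<noteq> {}" "I1 \<noteq> X \<union> Y"
      and direct: "vs.span (?z ` I1) \<inter> vs.span (?z ` (X \<union> Y - I1)) = {0}"
      unfolding splittable_def by blast
    have fin: "finite (X \<union> Y)"
      using less.prems(1,2) by simp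
    note rel = relation_restricts_if_split[OF fin I1(1) direct less.prems(5)]
    have parts: "X \<inter> I1 \<union> Y \<inter> I1 = I1" "(X - I1) \<union> (Y - I1) = X \<union> Y - I1"
      using I1(1) by auto
    have "card I1 < card (X \<union> Y)"
      using I1(1,3) fin by (intro psubset_card_mono) auto
    then have IH1: "card (X \<inter> I1) \<le> card (Y \<inter> I1) \<and> (card (X \<inter> I1) = card (Y \<inter> I1) \<longrightarrow>
        image_mset (\<lambda>i. vscale (\<mu> i) (?z i)) (mset_set (X \<inter> I1))
          = image_mset (\<lambda>i. vscale (- \<mu> i) (?z i)) (mset_set (Y \<inter> I1)))"
      using less.prems rel(1) I1(1) card_mono[OF less.prems(2), of "Y \<inter> I1"]
      by (intro less.hyps) (auto simp: parts)
    have "card (X \<union> Y - I1) < card (X \<union> Y)"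
      using I1(1,2) fin by (intro psubset_card_mono) auto
    then have IH2: "card (X - I1) \<le> card (Y - I1) \<and> (card (X - I1) = card (Y - I1) \<longrightarrow>
        image_mset (\<lambda>i. vscale (\<mu> i) (?z i)) (mset_set (X - I1))
          = image_mset (\<lambda>i. vscale (- \<mu> i) (?z i)) (mset_set (Y - I1)))"
      using less.prems rel(2) I1(1) card_mono[OF less.prems(2), of "Y - I1"]
        subset_trans[OF _ Diff_subset, of _ X I1]
      by (intro less.hyps) (auto simp: parts)
    have card_X: "card X = card (X \<inter> I1) + card (X - I1)"
      using less.prems(1) by (rule card_Int_Diff)
    have card_Y: "card Y = card (Y \<inter> I1) + card (Y - I1)"
      using less.prems(2) by (rule card_Int_Diff)
    have "mset_set X = mset_set (X \<inter> I1) + mset_set (X - I1)"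
      "mset_set Y = mset_set (Y \<inter> I1) + mset_set (Y - I1)"
      using less.prems(1,2) mset_set_Union[of "X \<inter> I1" "X - I1"] mset_set_Union[of "Y \<inter> I1" "Y - I1"]
      by (auto simp: Int_Diff_Un)
    then show ?thesis
      using IH1 IH2 card_X card_Y by auto
  qed
qed

lemma card_le_card_if_sums_eq:
  fixes x :: "'a \<Rightarrow> nat \<Rightarrow> 'b \<Rightarrow> 'f::field" and y :: "'c \<Rightarrow> nat \<Rightarrow> 'b \<Rightarrow> 'f"
  assumes "finite T" "finite K"
    and "\<And>a. a \<in> T \<Longrightarrow> ptensor m (x a) \<noteq> 0" "\<And>a. a \<in> T \<Longrightarrow> c a \<noteq> 0"
    and "\<And>b. b \<in> K \<Longrightarrow> ptensor m (y b) \<noteq> 0" "card K \<le> r"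
    and bound: "\<And>S. S \<subseteq> T \<Longrightarrow> 2 \<le> card S \<Longrightarrow> int (card S) + int (min (card S) r) \<le> factor_dims_bound m x S"
    and sums: "(\<Sum>a\<in>T. vscale (c a) (ptensor m (x a))) = (\<Sum>b\<in>K. ptensor m (y b))"
  shows "card T \<le> card K \<and> (card T = card K \<longrightarrow>
    image_mset (\<lambda>a. vscale (c a) (ptensor m (x a))) (mset_set T) = image_mset (\<lambda>b. ptensor m (y b)) (mset_set K))"
proof -
  define f :: "'a + 'c \<Rightarrow> nat \<Rightarrow> 'b \<Rightarrow> 'f" where "f = case_sum x y"
  define \<mu> :: "'a + 'c \<Rightarrow> 'f" where "\<mu> = case_sum c (\<lambda>_. - 1)"
  let ?X = "Inl ` T :: ('a + 'c) set" and ?Y = "Inr ` K :: ('a + 'c) set"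
  have "(\<Sum>i\<in>?X \<union> ?Y. vscale (\<mu> i) (ptensor m (f i)))
      = (\<Sum>i\<in>?X. vscale (\<mu> i) (ptensor m (f i))) + (\<Sum>i\<in>?Y. vscale (\<mu> i) (ptensor m (f i)))"
    using assms(1,2) by (intro sum.union_disjoint) auto
  also have "\<dots> = 0"
    using sums by (simp add: sum.reindex f_def \<mu>_def vs.scale_minus_left sum_negf)
  finally have rel: "(\<Sum>i\<in>?X \<union> ?Y. vscale (\<mu> i) (ptensor m (f i))) = 0" .
  have bound': "int (card S) + int (min (card S) r) \<le> factor_dims_bound m f S"
    if S: "S \<subseteq> ?X" "2 \<le> card S" for S
  proof -
    obtain S' where S': "S' \<subseteq> T" "S = Inl ` S'"
      using S(1) unfolding subset_image_iff by blast
    then show ?thesis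
      using bound[of S'] S(2) by (simp add: card_image factor_dims_bound_def image_image f_def)
  qed
  have "ptensor m (f i) \<noteq> 0" and "\<mu> i \<noteq> 0" if "i \<in> ?X \<union> ?Y" for i
    using that assms(3-5) by (auto simp: f_def \<mu>_def)
  then have "card ?X \<le> card ?Y \<and> (card ?X = card ?Y \<longrightarrow>
      image_mset (\<lambda>i. vscale (\<mu> i) (ptensor m (f i))) (mset_set ?X)
        = image_mset (\<lambda>i. vscale (- \<mu> i) (ptensor m (f i))) (mset_set ?Y))"
    using assms(1,2,6) rel bound' by (intro card_le_card_if_relation) (auto simp: card_image)
  then show ?thesis
    by (simp add: card_image image_mset_mset_set[symmetric] multiset.map_comp comp_def f_def \<mu>_def)
qed

lemma card_le_size_if_sum_eq:
  fixes x :: "'a \<Rightarrow> nat \<Rightarrow> 'b \<Rightarrow> 'f::field"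
  assumes "finite T" "\<And>a. a \<in> T \<Longrightarrow> ptensor m (x a) \<noteq> 0" "\<And>a. a \<in> T \<Longrightarrow> c a \<noteq> 0"
    and "\<And>S. S \<subseteq> T \<Longrightarrow> 2 \<le> card S \<Longrightarrow> int (card S) + int (min (card S) r) \<le> factor_dims_bound m x S"
    and Y: "\<forall>y\<in>#Y. product_tensor m y" "size Y \<le> r" "sum_mset Y = (\<Sum>a\<in>T. tscale (c a) (ptensor m (x a)))"
  shows "card T \<le> size Y \<and>
    (card T = size Y \<longrightarrow> Y = image_mset (\<lambda>a. tscale (c a) (ptensor m (x a))) (mset_set T))"
proof -
  obtain ys where ys: "Y = mset ys"
    using ex_mset by metis
  let ?k = "length ys"
  have "\<forall>b\<in>{..<?k}. product_tensor m (ys ! b)"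
    using Y(1) ys nth_mem by fastforce
  then obtain y where y: "\<And>b. b \<in> {..<?k} \<Longrightarrow> ys ! b = ptensor m (y b) \<and> ptensor m (y b) \<noteq> 0"
    unfolding product_tensor_def by metis
  have Y_eq: "Y = image_mset (\<lambda>b. ptensor m (y b)) (mset_set {..<?k})"
  proof -
    have "Y = image_mset (\<lambda>b. ys ! b) (mset_set {..<?k})"
      unfolding ys by (metis map_nth mset_map mset_upt atLeast0LessThan)
    also have "\<dots> = image_mset (\<lambda>b. ptensor m (y b)) (mset_set {..<?k})"
      using y by (intro image_mset_cong) auto
    finally show ?thesis .
  qed
  then have "(\<Sum>a\<in>T. vscale (c a) (ptensor m (x a))) = (\<Sum>b<?k. ptensor m (y b))"
    using Y(3) by (simp add: tscale_eq_vscale sum_unfold_sum_mset)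
  then have "card T \<le> card {..<?k} \<and> (card T = card {..<?k} \<longrightarrow>
      image_mset (\<lambda>a. vscale (c a) (ptensor m (x a))) (mset_set T)
        = image_mset (\<lambda>b. ptensor m (y b)) (mset_set {..<?k}))"
    using assms(1-4) y Y(2) ys by (intro card_le_card_if_sums_eq) auto
  then show ?thesis
    using Y_eq ys by (simp add: tscale_eq_vscale)
qed

lemma product_tensor_tscale_ptensor:
  fixes z :: "nat \<Rightarrow> 'b \<Rightarrow> 'f::field"
  assumes "1 \<le> m" "c \<noteq> 0" "ptensor m z \<noteq> 0"
  shows "product_tensor m (tscale c (ptensor m z))"
proof -
  have slots: "{1..m} = insert 1 {2..m}"
    using assms(1) by auto
  have split: "ptensor m z' i = z' 1 (i 1) * (\<Prod>j\<in>{2..m}. z' j (i j))" for z' :: "nat \<Rightarrow> 'b \<Rightarrow> 'f" and i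
    unfolding ptensor_def slots by simp
  have "(\<Prod>j\<in>{2..m}. (z(1 := vscale c (z 1))) j (i j)) = (\<Prod>j\<in>{2..m}. z j (i j))" for i
    by (rule prod.cong) auto
  then have "tscale c (ptensor m z) = ptensor m (z(1 := vscale c (z 1)))"
    by (simp add: split tscale_def vscale_def fun_eq_iff mult.assoc)
  moreover have "tscale c (ptensor m z) \<noteq> 0"
    using assms(2,3) by (simp add: tscale_eq_vscale)
  ultimately show ?thesis
    unfolding product_tensor_def by blast
qed

lemma ex_tensor_rank_decomposition:
  assumes "\<forall>y\<in>#Y. product_tensor m y" "sum_mset Y = v"
  obtains Y' where "size Y' = tensor_rank m v" "\<forall>y\<in>#Y'. product_tensor m y" "sum_mset Y' = v"
proof -
  have "\<exists>Y'. size Y' = tensor_rank m v \<and> (\<forall>y\<in>#Y'. product_tensor m y) \<and> sum_mset Y' = v"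
    unfolding tensor_rank_def by (rule LeastI_ex) (use assms in blast)
  then show ?thesis
    using that by blast
qed

context
  fixes m r :: nat and A :: "'a set" and x :: "'a \<Rightarrow> nat \<Rightarrow> 'b \<Rightarrow> 'f::field"
  assumes finite_A: "finite A" and m_pos: "1 \<le> m"
    and x_nz: "\<forall>a\<in>A. ptensor m (x a) \<noteq> 0"
    and bound: "\<forall>S. S \<subseteq> A \<and> 2 \<le> card S \<longrightarrow>
      int (card S) + int (min (card S) r) \<le> factor_dims_bound m x S"
begin

lemma scaled_terms_decomposition:
  assumes "T \<subseteq> A" "\<forall>a\<in>T. c a \<noteq> 0"
  shows "\<forall>y\<in>#image_mset (\<lambda>a. tscale (c a) (ptensor m (x a))) (mset_set T). product_tensor m y"
    and "sum_mset (image_mset (\<lambda>a. tscale (c a) (ptensor m (x a))) (mset_set T))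
      = (\<Sum>a\<in>T. tscale (c a) (ptensor m (x a)))"
proof -
  have "product_tensor m (tscale (c a) (ptensor m (x a)))" if "a \<in> T" for a
    using that assms m_pos x_nz by (intro product_tensor_tscale_ptensor) auto
  then show "\<forall>y\<in>#image_mset (\<lambda>a. tscale (c a) (ptensor m (x a))) (mset_set T). product_tensor m y"
    using finite_subset[OF assms(1) finite_A] by simp
qed (simp add: sum_unfold_sum_mset)

lemma card_le_size_if_sum_eq_subset:
  assumes "T \<subseteq> A" "\<forall>a\<in>T. c a \<noteq> 0"
    and "\<forall>y\<in>#Y. product_tensor m y" "size Y \<le> r" "sum_mset Y = (\<Sum>a\<in>T. tscale (c a) (ptensor m (x a)))"
  shows "card T \<le> size Y \<and>
    (card T = size Y \<longrightarrow> Y = image_mset (\<lambda>a. tscale (c a) (ptensor m (x a))) (mset_set T))"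
  by (rule card_le_size_if_sum_eq) (use assms finite_subset[OF assms(1) finite_A] x_nz bound in auto)

lemma tensor_rank_gt_if_card_gt:
  assumes "T \<subseteq> A" "\<forall>a\<in>T. c a \<noteq> 0" "r < card T"
  shows "r < tensor_rank m (\<Sum>a\<in>T. tscale (c a) (ptensor m (x a)))"
proof -
  let ?v = "\<Sum>a\<in>T. tscale (c a) (ptensor m (x a))"
  obtain Y where Y: "size Y = tensor_rank m ?v" "\<forall>y\<in>#Y. product_tensor m y" "sum_mset Y = ?v"
    using ex_tensor_rank_decomposition[OF scaled_terms_decomposition[OF assms(1,2)]] by blast
  show ?thesis
  proof (rule ccontr)
    assume "\<not> r < tensor_rank m ?v"
    then have "size Y \<le> r"
      using Y(1) by simp
    then have "card T \<le> size Y"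
      using card_le_size_if_sum_eq_subset[OF assms(1,2) Y(2) _ Y(3)] by blast
    then show False
      using assms(3) \<open>size Y \<le> r\<close> by simp
  qed
qed

lemma unique_trd_if_tensor_rank_le:
  assumes "T \<subseteq> A" "\<forall>a\<in>T. c a \<noteq> 0" "tensor_rank m (\<Sum>a\<in>T. tscale (c a) (ptensor m (x a))) \<le> r"
  shows "unique_trd m (\<Sum>a\<in>T. tscale (c a) (ptensor m (x a)))
    (image_mset (\<lambda>a. tscale (c a) (ptensor m (x a))) (mset_set T))"
  unfolding unique_trd_def
proof (intro conjI allI impI)
  let ?Z = "image_mset (\<lambda>a. tscale (c a) (ptensor m (x a))) (mset_set T)"
  show "\<forall>z\<in>#?Z. product_tensor m z" "sum_mset ?Z = (\<Sum>a\<in>T. tscale (c a) (ptensor m (x a)))"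
    using scaled_terms_decomposition[OF assms(1,2)] by blast+
  fix Y
  assume Y: "size Y \<le> size ?Z \<and> (\<forall>y\<in>#Y. product_tensor m y)
    \<and> sum_mset Y = (\<Sum>a\<in>T. tscale (c a) (ptensor m (x a)))"
  have "card T \<le> r"
    using tensor_rank_gt_if_card_gt[OF assms(1,2)] assms(3) by fastforce
  then have "card T \<le> size Y \<and> (card T = size Y \<longrightarrow> Y = ?Z)"
    using Y by (intro card_le_size_if_sum_eq_subset[OF assms(1,2)]) auto
  then show "Y = ?Z"
    using Y by simp
qed

end

theorem corollary7p3:
  fixes n m r :: nat
    and x :: "nat \<Rightarrow> nat \<Rightarrow> 'b \<Rightarrow> 'f::field"
  assumes "n \<ge> 2" and "m \<ge> 2" and "r \<le> n"
    and prod: "\<forall>a\<in>{1..n}. product_tensor m (ptensor m (x a))"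
    and cond: "\<forall>S. S \<subseteq> {1..n} \<and> 2 \<le> card S \<longrightarrow>
        int (card S) + int (min (card S) r)
          \<le> (\<Sum>j\<in>{1..m}. (int (fdim {x a j | a. a \<in> S}) - 1)) + 1"
  shows "(\<forall>T c v. T \<subseteq> {1..n} \<and> card T > r \<and> (\<forall>a\<in>T. c a \<noteq> 0)
            \<and> v = (\<Sum>a\<in>T. tscale (c a) (ptensor m (x a))) \<and> v \<noteq> 0
            \<longrightarrow> tensor_rank m v > r)
       \<and> (\<forall>c v. v = (\<Sum>a\<in>{1..n}. tscale (c a) (ptensor m (x a))) \<and> tensor_rank m v \<le> r
            \<longrightarrow> (\<exists>T d. T \<subseteq> {1..n} \<and> (\<forall>a\<in>T. d a \<noteq> 0) \<and>
                   unique_trd m v (image_mset (\<lambda>a. tscale (d a) (ptensor m (x a))) (mset_set T))))"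
proof -
  have m_pos: "1 \<le> m"
    using assms(2) by simp
  have x_nz: "\<forall>a\<in>{1..n}. ptensor m (x a) \<noteq> 0"
    using prod unfolding product_tensor_def by blast
  have bound: "\<forall>S. S \<subseteq> {1..n} \<and> 2 \<le> card S \<longrightarrow>
      int (card S) + int (min (card S) r) \<le> factor_dims_bound m x S"
    using cond by (simp add: factor_dims_bound_def fdim_def Setcompr_eq_image)
  note rank_gt = tensor_rank_gt_if_card_gt[OF finite_atLeastAtMost m_pos x_nz bound]
  note unique = unique_trd_if_tensor_rank_le[OF finite_atLeastAtMost m_pos x_nz bound]
  show ?thesis
  proof (intro conjI allI impI; elim conjE)
    fix T c v
    assume "T \<subseteq> {1..n}" "r < card T" "\<forall>a\<in>T. c a \<noteq> 0" and v: "v = (\<Sum>a\<in>T. tscale (c a) (ptensor m (x a)))"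
    then show "r < tensor_rank m v"
      unfolding v by (intro rank_gt)
  next
    fix c v
    assume v: "v = (\<Sum>a\<in>{1..n}. tscale (c a) (ptensor m (x a)))" "tensor_rank m v \<le> r"
    define T where "T = {a \<in> {1..n}. c a \<noteq> 0}"
    have T: "T \<subseteq> {1..n}" "\<forall>a\<in>T. c a \<noteq> 0"
      unfolding T_def by auto
    have v_T: "v = (\<Sum>a\<in>T. tscale (c a) (ptensor m (x a)))"
      unfolding v(1) T_def by (rule sum.mono_neutral_right) (auto simp: tscale_def)
    have "unique_trd m v (image_mset (\<lambda>a. tscale (c a) (ptensor m (x a))) (mset_set T))"
      using unique[OF T] v(2) unfolding v_T .
    then show "\<exists>T d. T \<subseteq> {1..n} \<and> (\<forall>a\<in>T. d a \<noteq> 0) \<and>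
        unique_trd m v (image_mset (\<lambda>a. tscale (d a) (ptensor m (x a))) (mset_set T))"
      using T by blast
  qed
qed

end
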